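(* Consider an arbitrary sequence of instances $\{\mathcal{I}_N\}$ of the binary voting game and an arbitrary sequence of strategy profiles $\{\Sigma_N\}_{N\ge1}$ ($\Sigma_N$ a profile in $\mathcal{I}_N$), and let $f^N$ be the excess expected vote share of $\Sigma_N$. (i) If $\liminf_{N\to\infty}\sqrt N f^N=+\infty$, then $\lim_{N\to\infty}A(\Sigma_N)=1$. (ii) If $\liminf_{N\to\infty}\sqrt N f^N<0$ (including $-\infty$), then $A(\Sigma_N)$ does not converge to $1$. (iii) If $0\le\liminf_{N\to\infty}\sqrt N f^N<+\infty$ and there is a constant $\psi>0$ such that $\mathrm{Var}\big(\sum_{n=1}^N X_n^N\mid W=w\big)\ge\psi N$ for every $N$ and every state $w\in\{L,H\}$, then $A(\Sigma_N)$ does not converge to $1$.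
   Context: Binary voting game. An instance has $N$ agents each voting for $\mathbf{A}$ or $\mathbf{R}$. Unobserved world state $W\in\{L,H\}$ with common prior $P_L,P_H>0$. Conditional on $W$, each agent independently receives a signal $S_n\in\{l,h\}$ with $P_{sw}=\Pr[S_n=s\mid W=w]$, $P_{hH}>P_{hL}$, $P_{lH}<P_{lL}$. With threshold $\mu\in(0,1)$, $\mathbf{A}$ wins iff at least $\mu N$ agents vote $\mathbf{A}$, else $\mathbf{R}$ wins. Agent $n$ has utility $v_n:\{L,H\}\times\{\mathbf{A},\mathbf{R}\}\to\{0,\dots,B\}$ with $v_n(H,\mathbf{A})>v_n(L,\mathbf{A})$, $v_n(H,\mathbf{R})<v_n(L,\mathbf{R})$; agents are friendly, unfriendly or contingent, with counts $\lfloor\alpha_F N\rfloor$, $\lfloor\alpha_U N\rfloor$ and the rest, for fixed $\alpha_F,\alpha_U,\alpha_C\ge0$ summing to 1, $\alpha_F<\mu$, $\alpha_U<1-\mu$; the informed majority decision is $\mathbf{A}$ in $H$ and $\mathbf{R}$ in $L$. A sequence of instances $\{\mathcal{I}_N\}$: $\mathcal{I}_N$ has $N$ agents; all share $\mu$, prior, signal distribution, $\alpha$'s; utilities arbitrary. Strategy $\sigma=(\beta_l,\beta_h)$, $\beta_s$ = probability of voting $\mathbf{A}$ on signal $s$; profile $\Sigma=(\sigma_1,\dots,\sigma_N)$. Fidelity $A(\Sigma)=P_L\lambda^{\mathbf{R}}_L(\Sigma)+P_H\lambda^{\mathbf{A}}_H(\Sigma)$, where $\lambda^{\mathbf{X}}_w(\Sigma)$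 is the ex-ante probability that $\mathbf{X}$ wins in state $w$. For the profile $\Sigma_N$, let $X_n^N=1$ if agent $n$ votes $\mathbf{A}$ and $0$ otherwise. Excess expected vote share: $f^N_H=\frac1N\sum_{n=1}^N E[X_n^N\mid W=H]-\mu$, $f^N_L=\frac1N\sum_{n=1}^N E[1-X_n^N\mid W=L]-(1-\mu)$, and $f^N=\min(f^N_H,f^N_L)$. *)

theory Defs
  imports "HOL-Probability.Probability"
begin

datatype world = L | H

text \<open>A strategy is a pair (beta_l, beta_h) of probabilities of voting A after
 signal l resp. h. Ph w = Pr[S = h | W = w], so Pr[S = l | W = w] = 1 - Ph w.
 Votes are encoded as booleans: True = vote A.\<close>

definition vote_pmf :: "(world \<Rightarrow> real) \<Rightarrow> world \<Rightarrow> real \<times> real \<Rightarrow> bool pmf" where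
  "vote_pmf Ph w \<sigma> = bind_pmf (bernoulli_pmf (Ph w))
      (\<lambda>s. bernoulli_pmf (if s then snd \<sigma> else fst \<sigma>))"

definition profile_pmf :: "(world \<Rightarrow> real) \<Rightarrow> world \<Rightarrow> nat \<Rightarrow> (nat \<Rightarrow> real \<times> real) \<Rightarrow> (nat \<Rightarrow> bool) pmf" where
  "profile_pmf Ph w N \<Sigma> = Pi_pmf {..<N} False (\<lambda>n. vote_pmf Ph w (\<Sigma> n))"

definition votesA :: "nat \<Rightarrow> (nat \<Rightarrow> bool) \<Rightarrow> nat" where
  "votesA N x = card {n \<in> {..<N}. x n}"

definition lamA :: "(world \<Rightarrow> real) \<Rightarrow> real \<Rightarrow> world \<Rightarrow> nat \<Rightarrow> (nat \<Rightarrow> real \<times> real) \<Rightarrow> real" where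
  "lamA Ph \<mu> w N \<Sigma> = measure_pmf.prob (profile_pmf Ph w N \<Sigma>) {x. real (votesA N x) \<ge> \<mu> * real N}"

definition lamR :: "(world \<Rightarrow> real) \<Rightarrow> real \<Rightarrow> world \<Rightarrow> nat \<Rightarrow> (nat \<Rightarrow> real \<times> real) \<Rightarrow> real" where
  "lamR Ph \<mu> w N \<Sigma> = measure_pmf.prob (profile_pmf Ph w N \<Sigma>) {x. real (votesA N x) < \<mu> * real N}"

definition fidelity :: "(world \<Rightarrow> real) \<Rightarrow> (world \<Rightarrow> real) \<Rightarrow> real \<Rightarrow> nat \<Rightarrow> (nat \<Rightarrow> real \<times> real) \<Rightarrow> real" where
  "fidelity prior Ph \<mu> N \<Sigma> = prior L * lamR Ph \<mu> L N \<Sigma> + prior H * lamA Ph \<mu> H N \<Sigma>"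

definition excess_H :: "(world \<Rightarrow> real) \<Rightarrow> real \<Rightarrow> nat \<Rightarrow> (nat \<Rightarrow> real \<times> real) \<Rightarrow> real" where
  "excess_H Ph \<mu> N \<Sigma> = (\<Sum>n<N. measure_pmf.prob (vote_pmf Ph H (\<Sigma> n)) {True}) / real N - \<mu>"

definition excess_L :: "(world \<Rightarrow> real) \<Rightarrow> real \<Rightarrow> nat \<Rightarrow> (nat \<Rightarrow> real \<times> real) \<Rightarrow> real" where
  "excess_L Ph \<mu> N \<Sigma> = (\<Sum>n<N. measure_pmf.prob (vote_pmf Ph L (\<Sigma> n)) {False}) / real N - (1 - \<mu>)"

definition excess :: "(world \<Rightarrow> real) \<Rightarrow> real \<Rightarrow> nat \<Rightarrow> (nat \<Rightarrow> real \<times> real) \<Rightarrow> real" where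
  "excess Ph \<mu> N \<Sigma> = min (excess_H Ph \<mu> N \<Sigma>) (excess_L Ph \<mu> N \<Sigma>)"

definition vote_var :: "(world \<Rightarrow> real) \<Rightarrow> world \<Rightarrow> nat \<Rightarrow> (nat \<Rightarrow> real \<times> real) \<Rightarrow> real" where
  "vote_var Ph w N \<Sigma> = measure_pmf.variance (profile_pmf Ph w N \<Sigma>) (\<lambda>x. real (votesA N x))"

end

theory Submission
  imports Defs
begin

(* Given the state, the number S of A-votes is a sum of independent Bernoulli variables with
   mean m and variance V <= N/4, and the fidelity is one minus the prior-weighted error
   probabilities P_L(S >= mu N) and P_H(S < mu N); sqrt N f^N measures, in units of sqrt N,
   how far the means lie on the correct side of the threshold mu N.
   (i) Hoeffding's inequality bounds both error probabilities by exp(-2 (sqrt N f^N)^2).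
   (ii) If sqrt N f^N <= -c infinitely often, then in one state the mean lies c sqrt N on the
   wrong side, and Hoeffding bounds the probability of deciding correctly by exp(-2 c^2) < 1.
   (iii) If sqrt N f^N < K infinitely often and V >= psi N, anti-concentration shows that S
   falls K sqrt N below (or above) its mean with probability at least exp(-beta^2)/4: apply
   the Paley-Zygmund inequality to the exponential tilt exp(t (S - m)) with t = +-beta/sqrt N,
   whose first two moments are controlled by two-sided bounds on the Bernoulli moment
   generating function. *)

lemma expectation_Pi_pmf_component:
  fixes f :: "'a \<Rightarrow> real"
  assumes "finite A" "i \<in> A"
  shows "measure_pmf.expectation (Pi_pmf A d p) (\<lambda>x. f (x i)) = measure_pmf.expectation (p i) f"
  using integral_map_pmf[of "\<lambda>x. x i" "Pi_pmf A d p" f] assms by (simp add: Pi_pmf_component)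

lemma integrable_Pi_pmf_component:
  fixes f :: "'a \<Rightarrow> real"
  assumes "finite A" "i \<in> A" "integrable (measure_pmf (p i)) f"
  shows "integrable (measure_pmf (Pi_pmf A d p)) (\<lambda>x. f (x i))"
  using assms integrable_map_pmf_eq[of "\<lambda>x. x i" "Pi_pmf A d p" f] by (simp add: Pi_pmf_component)

lemma indep_vars_Pi_pmf_compose:
  assumes "finite A" "J \<subseteq> A"
  shows "prob_space.indep_vars (Pi_pmf A d p) (\<lambda>_. borel) (\<lambda>i x. f i (x i) :: real) J"
  by (intro prob_space.indep_vars_compose2[OF _ prob_space.indep_vars_subset[OF _ indep_vars_Pi_pmf]])
     (use assms in \<open>auto simp: measure_pmf.prob_space_axioms\<close>)

lemma expectation_prod_Pi_pmf_subset:
  fixes f :: "'i \<Rightarrow> 'a \<Rightarrow> real"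
  assumes "finite A" "J \<subseteq> A" "\<And>i. i \<in> J \<Longrightarrow> integrable (measure_pmf (p i)) (f i)"
  shows "measure_pmf.expectation (Pi_pmf A d p) (\<lambda>x. \<Prod>i\<in>J. f i (x i))
       = (\<Prod>i\<in>J. measure_pmf.expectation (p i) (f i))"
  using assms finite_subset[OF assms(2,1)]
  by (subst prob_space.indep_vars_lebesgue_integral[OF measure_pmf.prob_space_axioms])
     (auto intro!: prod.cong expectation_Pi_pmf_component integrable_Pi_pmf_component
        indep_vars_Pi_pmf_compose)

lemma expectation_bool_pmf:
  "measure_pmf.expectation q f = pmf q True * f True + (1 - pmf q True) * (f False :: real)"
  by (subst integral_measure_pmf_real[where A=UNIV]) (auto simp: UNIV_bool pmf_False_conv_True)

lemma Maclaurin_exp_le_exp: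
  assumes "even n"
  shows "(\<Sum>m<n. u ^ m / fact m) \<le> exp (u :: real)"
proof -
  obtain t where "exp u = (\<Sum>m<n. u ^ m / fact m) + exp t / fact n * u ^ n"
    using Maclaurin_exp_le[of u n] by blast
  moreover have "0 \<le> u ^ n" using assms by (rule zero_le_even_power)
  ultimately show ?thesis by simp
qed

lemma exp_le_Maclaurin_exp:
  assumes "odd n" "u \<le> 0"
  shows "exp (u :: real) \<le> (\<Sum>m<n. u ^ m / fact m)"
proof -
  obtain t where "exp u = (\<Sum>m<n. u ^ m / fact m) + exp t / fact n * u ^ n"
    using Maclaurin_exp_le[of u n] by blast
  moreover have "u ^ n \<le> 0" using assms by (auto simp: power_le_zero_eq odd_pos)
  ultimately show ?thesis by (simp add: mult_nonneg_nonpos divide_nonpos_pos)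
qed

lemma exp_le_quadratic:
  assumes "\<bar>u\<bar> \<le> 1"
  shows "exp (u :: real) \<le> 1 + u + u\<^sup>2"
proof (cases "0 \<le> u")
  case True
  then show ?thesis using exp_bound[of u] assms by simp
next
  case False
  then have "exp u \<le> (\<Sum>m<3. u ^ m / fact m)" by (intro exp_le_Maclaurin_exp) auto
  also have "\<dots> = 1 + u + u\<^sup>2 / 2" by (simp add: eval_nat_numeral)
  finally show ?thesis using zero_le_power2[of u] by linarith
qed

definition centered_bernoulli_mgf :: "real \<Rightarrow> real \<Rightarrow> real" where
  "centered_bernoulli_mgf q t = q * exp (t * (1 - q)) + (1 - q) * exp (- t * q)"

lemma centered_bernoulli_mgf_le:
  assumes "0 \<le> q" "q \<le> 1" "\<bar>t\<bar> \<le> 1"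
  shows "centered_bernoulli_mgf q t \<le> exp (t\<^sup>2 * (q * (1 - q)))"
proof -
  have "\<bar>t * (1 - q)\<bar> \<le> 1" "\<bar>- t * q\<bar> \<le> 1"
    using assms by (simp_all add: abs_mult mult_le_one)
  then have "centered_bernoulli_mgf q t
      \<le> q * (1 + t * (1 - q) + (t * (1 - q))\<^sup>2) + (1 - q) * (1 + - t * q + (- t * q)\<^sup>2)"
    unfolding centered_bernoulli_mgf_def using assms
    by (intro add_mono mult_left_mono exp_le_quadratic) auto
  also have "\<dots> = 1 + t\<^sup>2 * (q * (1 - q))" by (simp add: power2_eq_square algebra_simps)
  also have "\<dots> \<le> exp (t\<^sup>2 * (q * (1 - q)))" by (rule exp_ge_add_one_self)
  finally show ?thesis .
qed

lemma centered_bernoulli_mgf_ge: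
  assumes "0 \<le> q" "q \<le> 1" "\<bar>t\<bar> \<le> 1/2"
  shows "exp (t\<^sup>2 * (q * (1 - q)) / 5) \<le> centered_bernoulli_mgf q t"
proof -
  define v where "v = q * (1 - q)"
  have "0 \<le> (q - 1/2)\<^sup>2" by simp
  then have v: "0 \<le> v" "v \<le> 1/4"
    using assms by (simp_all add: v_def power2_eq_square algebra_simps mult_left_le)
  have "t\<^sup>2 \<le> (1/2)\<^sup>2"
    using assms abs_le_square_iff[of t "1/2"] by simp
  then have "t\<^sup>2 \<le> 1/4" by (simp add: power2_eq_square)
  then have tv: "t\<^sup>2 * v \<le> 1/4 * 1" using v by (intro mult_mono) auto
  have "1 + t\<^sup>2 * v / 2 + (t\<^sup>2 * v) * (t * (1 - 2 * q)) / 6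
      = q * (\<Sum>m<4. (t * (1 - q)) ^ m / fact m) + (1 - q) * (\<Sum>m<4. (- t * q) ^ m / fact m)"
    by (simp add: v_def eval_nat_numeral field_simps)
  also have "\<dots> \<le> centered_bernoulli_mgf q t"
    unfolding centered_bernoulli_mgf_def using assms
    by (intro add_mono mult_left_mono Maclaurin_exp_le_exp) auto
  finally have mgf: "1 + t\<^sup>2 * v / 2 + (t\<^sup>2 * v) * (t * (1 - 2 * q)) / 6 \<le> centered_bernoulli_mgf q t" .
  have "\<bar>1 - 2 * q\<bar> \<le> 1" using assms by auto
  then have "\<bar>t\<bar> * \<bar>1 - 2 * q\<bar> \<le> 1/2 * 1" using assms by (intro mult_mono) auto
  then have "- (1/2) \<le> t * (1 - 2 * q)" by (simp add: abs_mult[symmetric] abs_le_iff)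
  then have "(t\<^sup>2 * v) * (- 1/2) \<le> (t\<^sup>2 * v) * (t * (1 - 2 * q))"
    using v by (intro mult_left_mono) auto
  moreover define y where "y = t\<^sup>2 * v / 5"
  have y: "0 \<le> y" "y \<le> 1" using v tv by (simp_all add: y_def)
  then have "exp y \<le> 1 + y + y\<^sup>2" by (rule exp_bound)
  moreover have "y\<^sup>2 \<le> y" using y by (simp add: power2_eq_square mult_left_le)
  ultimately have "exp y \<le> centered_bernoulli_mgf q t" using mgf y y_def by linarith
  then show ?thesis by (simp add: y_def v_def)
qed

lemma paley_zygmund_pmf:
  fixes M :: "'a pmf" and Z :: "'a \<Rightarrow> real"
  assumes int: "integrable M Z" "integrable M (\<lambda>x. (Z x)\<^sup>2)"
    and small: "\<And>x. x \<notin> E \<Longrightarrow> Z x \<le> c"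
    and mean: "0 < measure_pmf.expectation M Z" "2 * c \<le> measure_pmf.expectation M Z"
  shows "(measure_pmf.expectation M Z)\<^sup>2 / (4 * measure_pmf.expectation M (\<lambda>x. (Z x)\<^sup>2))
      \<le> measure_pmf.prob M E"
proof -
  define m where "m = measure_pmf.expectation M Z"
  define m2 where "m2 = measure_pmf.expectation M (\<lambda>x. (Z x)\<^sup>2)"
  have "m\<^sup>2 \<le> m2"
    using measure_pmf.variance_positive[of M Z] measure_pmf.variance_eq[OF int]
    by (simp add: m_def m2_def)
  moreover have "0 < m\<^sup>2" using mean(1) by (simp add: m_def)
  ultimately have m2: "0 < m2" by linarith
  \<comment> \<open>This choice of \<open>\<theta>\<close> optimises the AM-GM bound \<open>Z \<le> Z\<^sup>2 / (2 * \<theta>) + \<theta> / 2\<close> used on \<open>E\<close>.\<close>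
  define \<theta> where "\<theta> = 2 * m2 / m"
  have \<theta>: "0 < \<theta>" using m2 mean by (simp add: \<theta>_def m_def)
  have "Z x \<le> c * indicator (- E) x + (Z x)\<^sup>2 / (2 * \<theta>) + \<theta> / 2 * indicator E x" for x
  proof (cases "x \<in> E")
    case True
    have "0 \<le> (Z x - \<theta>)\<^sup>2" by simp
    then show ?thesis using True \<theta> by (simp add: field_simps power2_eq_square)
  next
    case False
    moreover have "0 \<le> (Z x)\<^sup>2 / (2 * \<theta>)" using \<theta> by simp
    ultimately show ?thesis using small[of x] by simp
  qed
  moreover have ind: "integrable M (indicat_real S)" for S
    by (simp add: less_top[symmetric])
  ultimately have "m \<le> measure_pmf.expectation M (\<lambda>x. c * indicator (- E) x + (Z x)\<^sup>2 / (2 * \<theta>) + \<theta> / 2 * indicator E x)"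
    unfolding m_def using int by (intro integral_mono) auto
  also have "\<dots> = c * measure_pmf.prob M (- E) + m2 / (2 * \<theta>) + \<theta> / 2 * measure_pmf.prob M E"
    using int ind by (simp add: m2_def)
  also have "\<dots> \<le> m / 2 + m / 4 + \<theta> / 2 * measure_pmf.prob M E"
  proof -
    have "c * measure_pmf.prob M (- E) \<le> max c 0"
      by (cases "0 \<le> c") (auto intro: mult_left_le mult_nonpos_nonneg)
    moreover have "m2 / (2 * \<theta>) = m / 4" using m2 mean by (simp add: \<theta>_def m_def)
    ultimately show ?thesis using mean by (simp add: m_def)
  qed
  finally have "m / (2 * \<theta>) \<le> measure_pmf.prob M E" using \<theta> by (simp add: field_simps)
  also have "m / (2 * \<theta>) = m\<^sup>2 / (4 * m2)" using m2 mean by (simp add: \<theta>_def m_def power2_eq_square)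
  finally show ?thesis by (simp add: m_def m2_def)
qed

locale poisson_binomial =
  fixes A :: "'i set" and p :: "'i \<Rightarrow> bool pmf"
  assumes finite_A: "finite A"
begin

abbreviation P :: "('i \<Rightarrow> bool) pmf" where "P \<equiv> Pi_pmf A False p"

definition successes :: "('i \<Rightarrow> bool) \<Rightarrow> real" where
  "successes x = (\<Sum>i\<in>A. of_bool (x i))"

definition mean :: real where
  "mean = (\<Sum>i\<in>A. pmf (p i) True)"

definition var :: real where
  "var = (\<Sum>i\<in>A. pmf (p i) True * (1 - pmf (p i) True))"

lemma integrable_P [simp]: "integrable (measure_pmf P) (f :: _ \<Rightarrow> real)"
  by (rule integrable_measure_pmf_finite) (auto simp: set_Pi_pmf finite_A)

lemma expectation_prod:
  assumes "J \<subseteq> A"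
  shows "measure_pmf.expectation P (\<lambda>x. \<Prod>i\<in>J. f i (x i))
       = (\<Prod>i\<in>J. pmf (p i) True * f i True + (1 - pmf (p i) True) * f i False)"
  using assms finite_A
  by (simp add: expectation_prod_Pi_pmf_subset integrable_measure_pmf_finite expectation_bool_pmf)

lemma expectation_of_bool:
  "i \<in> A \<Longrightarrow> measure_pmf.expectation P (\<lambda>x. of_bool (x i)) = pmf (p i) True"
  using expectation_prod[of "{i}" "\<lambda>_ b. of_bool b"] by simp

lemma expectation_successes: "measure_pmf.expectation P successes = mean"
  unfolding successes_def[abs_def] mean_def by (simp add: Bochner_Integration.integral_sum expectation_of_bool)

lemma successes_minus_mean:
  "successes x - mean = (\<Sum>i\<in>A. of_bool (x i) - pmf (p i) True)"
  by (simp add: successes_def mean_def sum_subtractf)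

lemma variance_successes: "measure_pmf.variance P successes = var"
proof -
  define Y where "Y i b = of_bool b - pmf (p i) True" for i b
  have EYY: "measure_pmf.expectation P (\<lambda>x. Y i (x i) * Y j (x j))
      = (if i = j then pmf (p i) True * (1 - pmf (p i) True) else 0)" if "i \<in> A" "j \<in> A" for i j
  proof (cases "i = j")
    case True
    then show ?thesis
      using that expectation_prod[of "{i}" "\<lambda>_ b. (Y i b)\<^sup>2"]
      by (simp add: Y_def power2_eq_square algebra_simps)
  next
    case False
    then show ?thesis
      using that expectation_prod[of "{i, j}" Y] by (simp add: Y_def algebra_simps)
  qed
  have "measure_pmf.variance P successes
      = measure_pmf.expectation P (\<lambda>x. \<Sum>i\<in>A. \<Sum>j\<in>A. Y i (x i) * Y j (x j))"
    by (simp add: expectation_successes successes_minus_mean power2_eq_square sum_product Y_def)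
  also have "\<dots> = var"
    by (simp add: EYY var_def finite_A cong: sum.cong)
  finally show ?thesis .
qed

interpretation hoeffding: Hoeffding_ineq P A "\<lambda>i x. of_bool (x i)" "\<lambda>_. 0" "\<lambda>_. 1" mean
  by unfold_locales
    (auto simp: finite_A mean_def expectation_of_bool intro: indep_vars_Pi_pmf_compose[OF finite_A order_refl])

lemma prob_successes_ge_le:
  assumes "A \<noteq> {}" "mean \<le> \<theta>"
  shows "measure_pmf.prob P {x. \<theta> \<le> successes x} \<le> exp (- 2 * (\<theta> - mean)\<^sup>2 / card A)"
  using hoeffding.Hoeffding_ineq_ge[of "\<theta> - mean"] assms finite_A
  by (simp add: successes_def card_gt_0_iff)

lemma prob_successes_less_le:
  assumes "A \<noteq> {}" "\<theta> \<le> mean"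
  shows "measure_pmf.prob P {x. successes x < \<theta>} \<le> exp (- 2 * (mean - \<theta>)\<^sup>2 / card A)"
proof -
  have "measure_pmf.prob P {x. successes x < \<theta>} \<le> measure_pmf.prob P {x. successes x \<le> mean - (mean - \<theta>)}"
    by (intro measure_pmf.finite_measure_mono) auto
  also have "\<dots> \<le> exp (- 2 * (mean - \<theta>)\<^sup>2 / card A)"
    using hoeffding.Hoeffding_ineq_le[of "mean - \<theta>"] assms finite_A
    by (simp add: successes_def card_gt_0_iff)
  finally show ?thesis .
qed

lemma var_bounds: "0 \<le> var" "var \<le> card A / 4"
proof -
  have q: "0 \<le> pmf (p i) True * (1 - pmf (p i) True)" "pmf (p i) True * (1 - pmf (p i) True) \<le> 1/4" for i
    using pmf_le_1[of "p i" True] zero_le_power2[of "pmf (p i) True - 1/2"]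
    by (simp_all add: power2_eq_square algebra_simps mult_left_le)
  show "0 \<le> var" unfolding var_def by (intro sum_nonneg q)
  have "var \<le> (\<Sum>i\<in>A. 1/4)" unfolding var_def by (intro sum_mono q)
  then show "var \<le> card A / 4" by simp
qed

lemma mgf_successes:
  "measure_pmf.expectation P (\<lambda>x. exp (t * (successes x - mean)))
     = (\<Prod>i\<in>A. centered_bernoulli_mgf (pmf (p i) True) t)"
proof -
  have "(\<lambda>x. exp (t * (successes x - mean))) = (\<lambda>x. \<Prod>i\<in>A. exp (t * (of_bool (x i) - pmf (p i) True)))"
    by (simp add: successes_minus_mean sum_distrib_left exp_sum finite_A)
  then show ?thesis
    using expectation_prod[OF order_refl, of "\<lambda>i b. exp (t * (of_bool b - pmf (p i) True))"]
    by (simp add: centered_bernoulli_mgf_def)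
qed

lemma mgf_successes_le:
  "\<bar>t\<bar> \<le> 1 \<Longrightarrow> measure_pmf.expectation P (\<lambda>x. exp (t * (successes x - mean))) \<le> exp (t\<^sup>2 * var)"
  unfolding mgf_successes var_def sum_distrib_left exp_sum[OF finite_A]
  by (intro prod_mono conjI centered_bernoulli_mgf_le)
     (auto simp: centered_bernoulli_mgf_def pmf_le_1)

lemma mgf_successes_ge:
  "\<bar>t\<bar> \<le> 1/2 \<Longrightarrow> exp (t\<^sup>2 * var / 5) \<le> measure_pmf.expectation P (\<lambda>x. exp (t * (successes x - mean)))"
  unfolding mgf_successes var_def sum_distrib_left sum_divide_distrib exp_sum[OF finite_A]
  by (intro prod_mono conjI centered_bernoulli_mgf_ge) (auto simp: pmf_le_1)

lemma anti_concentration: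
  assumes t: "\<bar>t\<bar> \<le> 1/2" and b: "2 * exp b \<le> exp (t\<^sup>2 * var / 5)"
  shows "exp (- (4 * t\<^sup>2 * var)) / 4 \<le> measure_pmf.prob P {x. b \<le> t * (successes x - mean)}"
proof -
  define Z where "Z x = exp (t * (successes x - mean))" for x
  define m where "m = measure_pmf.expectation P Z"
  define m2 where "m2 = measure_pmf.expectation P (\<lambda>x. (Z x)\<^sup>2)"
  have m: "exp (t\<^sup>2 * var / 5) \<le> m"
    unfolding m_def Z_def using mgf_successes_ge[OF t] .
  have "(\<lambda>x. (Z x)\<^sup>2) = (\<lambda>x. exp ((2 * t) * (successes x - mean)))"
    by (simp add: Z_def fun_eq_iff power2_eq_square exp_add[symmetric] algebra_simps)
  then have m2: "m2 \<le> exp (4 * t\<^sup>2 * var)"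
    using mgf_successes_le[of "2 * t"] t by (simp add: m2_def power_mult_distrib)
  have "1 \<le> exp (t\<^sup>2 * var / 5)" using var_bounds(1) by simp
  then have "1 \<le> m" using m by linarith
  have "m\<^sup>2 / (4 * m2) \<le> measure_pmf.prob P {x. b \<le> t * (successes x - mean)}"
    unfolding m_def m2_def
  proof (rule paley_zygmund_pmf)
    show "Z x \<le> exp b" if "x \<notin> {x. b \<le> t * (successes x - mean)}" for x
      using that by (simp add: Z_def)
  qed (use m b \<open>1 \<le> m\<close> in \<open>auto simp: m_def\<close>)
  moreover have "exp (- (4 * t\<^sup>2 * var)) / 4 \<le> m\<^sup>2 / (4 * m2)"
  proof -
    have "1 \<le> m\<^sup>2" using \<open>1 \<le> m\<close> by (rule one_le_power)
    moreover have "m\<^sup>2 \<le> m2"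
      using measure_pmf.variance_positive[of P Z] measure_pmf.variance_eq[of P Z]
      by (simp add: m_def m2_def)
    ultimately have "0 < m2" by linarith
    have "exp (- (4 * t\<^sup>2 * var)) / 4 = 1 / (4 * exp (4 * t\<^sup>2 * var))"
      by (simp add: exp_minus field_simps)
    also have "\<dots> \<le> 1 / (4 * m2)"
      using m2 \<open>0 < m2\<close> by (intro divide_left_mono) auto
    also have "\<dots> \<le> m\<^sup>2 / (4 * m2)"
      using \<open>1 \<le> m\<^sup>2\<close> \<open>0 < m2\<close> by (intro divide_right_mono) auto
    finally show ?thesis .
  qed
  ultimately show ?thesis by linarith
qed

lemma prob_successes_deviation_ge:
  fixes \<psi> K \<beta> :: real
  assumes var: "\<psi> * card A \<le> var" and \<beta>: "1 \<le> \<beta>" "5 * (K + 1) \<le> \<beta> * \<psi>"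
    and n: "4 * \<beta>\<^sup>2 \<le> card A"
  shows "exp (- \<beta>\<^sup>2) / 4 \<le> measure_pmf.prob P {x. successes x \<le> mean - K * sqrt (card A)}"
    and "exp (- \<beta>\<^sup>2) / 4 \<le> measure_pmf.prob P {x. mean + K * sqrt (card A) \<le> successes x}"
proof -
  define n where "n = real (card A)"
  have "1 \<le> \<beta>\<^sup>2" using \<beta>(1) by (rule one_le_power)
  then have n0: "0 < n" using n by (simp add: n_def)
  have dev: "exp (- \<beta>\<^sup>2) / 4 \<le> measure_pmf.prob P {x. \<beta> * K \<le> t * (successes x - mean)}"
    if t: "t\<^sup>2 = \<beta>\<^sup>2 / n" for t
  proof (rule order_trans[OF _ anti_concentration])
    have "t\<^sup>2 \<le> (n / 4) / n" unfolding t using n n0 by (intro divide_right_mono) (auto simp: n_def)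
    also have "\<dots> = (1/2)\<^sup>2" using n0 by (simp add: power2_eq_square)
    finally show "\<bar>t\<bar> \<le> 1/2" using abs_le_square_iff[of t "1/2"] by simp
    have "\<beta> * K + 1 \<le> \<beta>\<^sup>2 * \<psi> / 5"
      using \<beta> mult_left_mono[OF \<beta>(2), of \<beta>] by (simp add: power2_eq_square algebra_simps)
    also have "\<dots> \<le> t\<^sup>2 * var / 5"
      using mult_left_mono[OF var, of "\<beta>\<^sup>2 / n"] n0 by (simp add: t n_def)
    finally have "exp (\<beta> * K + 1) \<le> exp (t\<^sup>2 * var / 5)" by simp
    moreover have "2 * exp (\<beta> * K) \<le> exp (\<beta> * K + 1)"
      using exp_ge_add_one_self[of 1] by (simp add: exp_add)
    ultimately show "2 * exp (\<beta> * K) \<le> exp (t\<^sup>2 * var / 5)" by linarith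
    have "4 * t\<^sup>2 * var \<le> 4 * (\<beta>\<^sup>2 / n) * (n / 4)"
      unfolding t using var_bounds by (intro mult_left_mono) (auto simp: n_def)
    then show "exp (- \<beta>\<^sup>2) / 4 \<le> exp (- (4 * t\<^sup>2 * var)) / 4" using n0 by simp
  qed
  have "(s * \<beta> / sqrt n)\<^sup>2 = \<beta>\<^sup>2 / n" if "\<bar>s\<bar> = 1" for s :: real
    using n0 that by (auto simp: power_divide power_mult_distrib abs_eq_iff')
  moreover have "\<beta> * K \<le> s * \<beta> / sqrt n * y \<longleftrightarrow> K * sqrt n \<le> s * y" for s y :: real
  proof -
    have "s * \<beta> / sqrt n * y = \<beta> * (s * y / sqrt n)" by simp
    then show ?thesis using \<beta> n0 by (simp add: mult_le_cancel_left_pos pos_le_divide_eq)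
  qed
  ultimately have dev_sign: "exp (- \<beta>\<^sup>2) / 4 \<le> measure_pmf.prob P {x. K * sqrt n \<le> s * (successes x - mean)}"
    if "\<bar>s\<bar> = 1" for s :: real
    using dev[of "s * \<beta> / sqrt n"] that by simp
  show "exp (- \<beta>\<^sup>2) / 4 \<le> measure_pmf.prob P {x. successes x \<le> mean - K * sqrt (card A)}"
    using dev_sign[of "-1"] by (simp add: n_def algebra_simps)
  show "exp (- \<beta>\<^sup>2) / 4 \<le> measure_pmf.prob P {x. mean + K * sqrt (card A) \<le> successes x}"
    using dev_sign[of 1] by (simp add: n_def algebra_simps)
qed

end

interpretation votes: poisson_binomial "{..<N}" p
  rewrites "card {..<N} = N" for N :: nat and p :: "nat \<Rightarrow> bool pmf"
  by unfold_locales simp_all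

abbreviation vote_pmfs :: "(world \<Rightarrow> real) \<Rightarrow> world \<Rightarrow> (nat \<Rightarrow> real \<times> real) \<Rightarrow> nat \<Rightarrow> bool pmf" where
  "vote_pmfs Ph w \<Sigma> \<equiv> \<lambda>n. vote_pmf Ph w (\<Sigma> n)"

lemma votesA_eq_successes: "real (votesA N x) = votes.successes N x"
  by (simp add: votesA_def votes.successes_def of_bool_def sum.If_cases Int_def)

lemma lamA_eq: "lamA Ph \<mu> w N \<Sigma>
    = measure_pmf.prob (Pi_pmf {..<N} False (vote_pmfs Ph w \<Sigma>)) {x. \<mu> * N \<le> votes.successes N x}"
  by (simp add: lamA_def profile_pmf_def votesA_eq_successes)

lemma lamR_eq: "lamR Ph \<mu> w N \<Sigma>
    = measure_pmf.prob (Pi_pmf {..<N} False (vote_pmfs Ph w \<Sigma>)) {x. votes.successes N x < \<mu> * N}"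
  by (simp add: lamR_def profile_pmf_def votesA_eq_successes)

lemma lamR_eq_1_minus_lamA: "lamR Ph \<mu> w N \<Sigma> = 1 - lamA Ph \<mu> w N \<Sigma>"
proof -
  have "{x. real (votesA N x) < \<mu> * N} = space (profile_pmf Ph w N \<Sigma>) - {x. \<mu> * N \<le> real (votesA N x)}"
    by auto
  then show ?thesis
    unfolding lamR_def lamA_def by (simp only:) (rule measure_pmf.prob_compl, simp)
qed

lemma vote_var_eq: "vote_var Ph w N \<Sigma> = votes.var N (vote_pmfs Ph w \<Sigma>)"
  by (simp add: vote_var_def profile_pmf_def votesA_eq_successes[abs_def] votes.variance_successes)

lemma excess_H_eq:
  fixes \<mu> :: real
  assumes "0 < N"
  shows "votes.mean N (vote_pmfs Ph H \<Sigma>) - \<mu> * N = sqrt N * (sqrt N * excess_H Ph \<mu> N \<Sigma>)"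
  using assms by (simp add: excess_H_def votes.mean_def measure_pmf_single field_simps)

lemma excess_L_eq:
  fixes \<mu> :: real
  assumes "0 < N"
  shows "\<mu> * N - votes.mean N (vote_pmfs Ph L \<Sigma>) = sqrt N * (sqrt N * excess_L Ph \<mu> N \<Sigma>)"
proof -
  have votes_R: "(\<Sum>n<N. measure_pmf.prob (vote_pmf Ph L (\<Sigma> n)) {False}) = N - votes.mean N (vote_pmfs Ph L \<Sigma>)"
    by (simp add: votes.mean_def measure_pmf_single pmf_False_conv_True sum_subtractf)
  have "sqrt N * (sqrt N * excess_L Ph \<mu> N \<Sigma>) = N * excess_L Ph \<mu> N \<Sigma>"
    by (simp add: mult.assoc[symmetric])
  also have "\<dots> = \<mu> * N - votes.mean N (vote_pmfs Ph L \<Sigma>)"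
    using assms by (simp add: excess_L_def votes_R field_simps)
  finally show ?thesis by simp
qed

lemma fidelity_eq_1_minus_errors:
  assumes "prior L + prior H = 1"
  shows "fidelity prior Ph \<mu> N \<Sigma> = 1 - (prior L * lamA Ph \<mu> L N \<Sigma> + prior H * lamR Ph \<mu> H N \<Sigma>)"
  using assms by (simp add: fidelity_def lamR_eq_1_minus_lamA algebra_simps)

lemma fidelity_le_if_error:
  assumes prior: "0 \<le> prior L" "0 \<le> prior H" "prior L + prior H = 1" and "0 \<le> r"
    and error: "r \<le> lamA Ph \<mu> L N \<Sigma> \<or> r \<le> lamR Ph \<mu> H N \<Sigma>"
  shows "fidelity prior Ph \<mu> N \<Sigma> \<le> 1 - min (prior L) (prior H) * r"
proof -
  have lam: "0 \<le> lamA Ph \<mu> L N \<Sigma>" "0 \<le> lamR Ph \<mu> H N \<Sigma>"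
    by (simp_all add: lamA_def lamR_def)
  have "min (prior L) (prior H) * r \<le> prior L * lamA Ph \<mu> L N \<Sigma> + prior H * lamR Ph \<mu> H N \<Sigma>"
    using error
  proof
    assume "r \<le> lamA Ph \<mu> L N \<Sigma>"
    then have "min (prior L) (prior H) * r \<le> prior L * lamA Ph \<mu> L N \<Sigma>"
      using prior \<open>0 \<le> r\<close> by (intro mult_mono) auto
    then show ?thesis using prior lam by (simp add: add_increasing2)
  next
    assume "r \<le> lamR Ph \<mu> H N \<Sigma>"
    then have "min (prior L) (prior H) * r \<le> prior H * lamR Ph \<mu> H N \<Sigma>"
      using prior \<open>0 \<le> r\<close> by (intro mult_mono) auto
    then show ?thesis using prior lam by (simp add: add_increasing)
  qed
  then show ?thesis using prior by (simp add: fidelity_eq_1_minus_errors)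
qed

lemma mult_sqrt_square_divide: "0 < N \<Longrightarrow> c * (sqrt N * y)\<^sup>2 / N = c * y\<^sup>2"
  by (simp add: power_mult_distrib)

lemma fidelity_ge_if_excess_nonneg:
  assumes N: "0 < N" and prior: "0 \<le> prior L" "0 \<le> prior H" "prior L + prior H = 1"
    and e: "0 \<le> excess Ph \<mu> N \<Sigma>"
  shows "1 - exp (- 2 * (sqrt N * excess Ph \<mu> N \<Sigma>)\<^sup>2) \<le> fidelity prior Ph \<mu> N \<Sigma>"
proof -
  have Nr: "0 < real N" using N by simp
  define b where "b = exp (- 2 * (sqrt N * excess Ph \<mu> N \<Sigma>)\<^sup>2)"
  have b: "exp (- 2 * (sqrt N * f)\<^sup>2) \<le> b" if "excess Ph \<mu> N \<Sigma> \<le> f" for f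
    using that e N unfolding b_def by (simp add: power_mono mult_left_mono)
  note eH = excess_H_eq[OF N, where \<mu> = \<mu> and Ph = Ph and \<Sigma> = \<Sigma>]
  note eL = excess_L_eq[OF N, where \<mu> = \<mu> and Ph = Ph and \<Sigma> = \<Sigma>]
  have "0 \<le> excess_H Ph \<mu> N \<Sigma>" "0 \<le> excess_L Ph \<mu> N \<Sigma>" using e by (simp_all add: excess_def)
  then have "0 \<le> sqrt N * (sqrt N * excess_H Ph \<mu> N \<Sigma>)" "0 \<le> sqrt N * (sqrt N * excess_L Ph \<mu> N \<Sigma>)"
    by simp_all
  have "lamR Ph \<mu> H N \<Sigma> \<le> exp (- 2 * (votes.mean N (vote_pmfs Ph H \<Sigma>) - \<mu> * N)\<^sup>2 / N)"
    unfolding lamR_eq using eH \<open>0 \<le> sqrt N * (sqrt N * excess_H Ph \<mu> N \<Sigma>)\<close> N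
    by (intro votes.prob_successes_less_le) auto
  also have "\<dots> \<le> b"
    unfolding eH mult_sqrt_square_divide[OF Nr] by (rule b) (simp add: excess_def)
  finally have H: "lamR Ph \<mu> H N \<Sigma> \<le> b" .
  have "lamA Ph \<mu> L N \<Sigma> \<le> exp (- 2 * (\<mu> * N - votes.mean N (vote_pmfs Ph L \<Sigma>))\<^sup>2 / N)"
    unfolding lamA_eq using eL \<open>0 \<le> sqrt N * (sqrt N * excess_L Ph \<mu> N \<Sigma>)\<close> N
    by (intro votes.prob_successes_ge_le) auto
  also have "\<dots> \<le> b"
    unfolding eL mult_sqrt_square_divide[OF Nr] by (rule b) (simp add: excess_def)
  finally have L: "lamA Ph \<mu> L N \<Sigma> \<le> b" .
  have "prior L * lamA Ph \<mu> L N \<Sigma> + prior H * lamR Ph \<mu> H N \<Sigma> \<le> prior L * b + prior H * b"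
    using prior H L by (intro add_mono mult_left_mono) auto
  also have "\<dots> = b" using prior(3) by (metis distrib_right mult_1)
  finally show ?thesis unfolding fidelity_eq_1_minus_errors[OF prior(3)] b_def[symmetric] by linarith
qed

lemma error_ge_if_excess_le_neg:
  fixes \<mu> c :: real
  assumes N: "0 < N" and c: "0 \<le> c" and e: "sqrt N * excess Ph \<mu> N \<Sigma> \<le> - c"
  shows "1 - exp (- 2 * c\<^sup>2) \<le> lamA Ph \<mu> L N \<Sigma> \<or> 1 - exp (- 2 * c\<^sup>2) \<le> lamR Ph \<mu> H N \<Sigma>"
proof -
  have Nr: "0 < real N" using N by simp
  have b: "exp (- 2 * f\<^sup>2) \<le> exp (- 2 * c\<^sup>2)" if "f \<le> - c" for f
    using power_mono[of c "- f" 2] that c by simp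
  have neg: "sqrt N * f \<le> 0" if "f \<le> - c" for f
    using that c by (simp add: mult_nonneg_nonpos)
  from e consider "sqrt N * excess_H Ph \<mu> N \<Sigma> \<le> - c" | "sqrt N * excess_L Ph \<mu> N \<Sigma> \<le> - c"
    by (auto simp: excess_def min_def split: if_splits)
  then show ?thesis
  proof cases
    case 1
    note eH = excess_H_eq[OF N, where \<mu> = \<mu> and Ph = Ph and \<Sigma> = \<Sigma>]
    have "lamA Ph \<mu> H N \<Sigma> \<le> exp (- 2 * (\<mu> * N - votes.mean N (vote_pmfs Ph H \<Sigma>))\<^sup>2 / N)"
      unfolding lamA_eq using eH neg[OF 1] N by (intro votes.prob_successes_ge_le) auto
    also have "\<dots> \<le> exp (- 2 * c\<^sup>2)"
      unfolding power2_commute[of "\<mu> * N"] eH mult_sqrt_square_divide[OF Nr] using 1 by (rule b)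
    finally show ?thesis by (simp add: lamR_eq_1_minus_lamA)
  next
    case 2
    note eL = excess_L_eq[OF N, where \<mu> = \<mu> and Ph = Ph and \<Sigma> = \<Sigma>]
    have "lamR Ph \<mu> L N \<Sigma> \<le> exp (- 2 * (votes.mean N (vote_pmfs Ph L \<Sigma>) - \<mu> * N)\<^sup>2 / N)"
      unfolding lamR_eq using eL neg[OF 2] N by (intro votes.prob_successes_less_le) auto
    also have "\<dots> \<le> exp (- 2 * c\<^sup>2)"
      unfolding power2_commute[of "votes.mean N _"] eL mult_sqrt_square_divide[OF Nr] using 2 by (rule b)
    finally show ?thesis by (simp add: lamR_eq_1_minus_lamA)
  qed
qed

lemma error_ge_if_excess_less:
  fixes \<mu> \<psi> K \<beta> :: real
  assumes N: "0 < N" and var: "\<And>w. \<psi> * N \<le> vote_var Ph w N \<Sigma>"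
    and \<beta>: "1 \<le> \<beta>" "5 * (K + 1) \<le> \<beta> * \<psi>" "4 * \<beta>\<^sup>2 \<le> N"
    and e: "sqrt N * excess Ph \<mu> N \<Sigma> < K"
  shows "exp (- \<beta>\<^sup>2) / 4 \<le> lamA Ph \<mu> L N \<Sigma> \<or> exp (- \<beta>\<^sup>2) / 4 \<le> lamR Ph \<mu> H N \<Sigma>"
proof -
  have lt: "sqrt N * (sqrt N * f) < K * sqrt N" if "sqrt N * f < K" for f
    using that N by (simp add: mult.commute)
  note dev = votes.prob_successes_deviation_ge[OF var[unfolded vote_var_eq] \<beta>]
  from e consider "sqrt N * excess_H Ph \<mu> N \<Sigma> < K" | "sqrt N * excess_L Ph \<mu> N \<Sigma> < K"
    by (auto simp: excess_def min_def split: if_splits)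
  then show ?thesis
  proof cases
    case 1
    have "{x. votes.successes N x \<le> votes.mean N (vote_pmfs Ph H \<Sigma>) - K * sqrt N}
        \<subseteq> {x. votes.successes N x < \<mu> * N}"
      using lt[OF 1] excess_H_eq[OF N, where \<mu> = \<mu> and Ph = Ph and \<Sigma> = \<Sigma>] by auto
    then have "measure_pmf.prob (votes.P N (vote_pmfs Ph H \<Sigma>))
        {x. votes.successes N x \<le> votes.mean N (vote_pmfs Ph H \<Sigma>) - K * sqrt N}
        \<le> lamR Ph \<mu> H N \<Sigma>"
      unfolding lamR_eq by (rule measure_pmf.finite_measure_mono) simp
    then have "exp (- \<beta>\<^sup>2) / 4 \<le> lamR Ph \<mu> H N \<Sigma>" using dev(1)[of H] by linarith
    then show ?thesis ..
  next
    case 2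
    have "{x. votes.mean N (vote_pmfs Ph L \<Sigma>) + K * sqrt N \<le> votes.successes N x}
        \<subseteq> {x. \<mu> * N \<le> votes.successes N x}"
      using lt[OF 2] excess_L_eq[OF N, where \<mu> = \<mu> and Ph = Ph and \<Sigma> = \<Sigma>] by auto
    then have "measure_pmf.prob (votes.P N (vote_pmfs Ph L \<Sigma>))
        {x. votes.mean N (vote_pmfs Ph L \<Sigma>) + K * sqrt N \<le> votes.successes N x}
        \<le> lamA Ph \<mu> L N \<Sigma>"
      unfolding lamA_eq by (rule measure_pmf.finite_measure_mono) simp
    then have "exp (- \<beta>\<^sup>2) / 4 \<le> lamA Ph \<mu> L N \<Sigma>" using dev(2)[of L] by linarith
    then show ?thesis ..
  qed
qed

lemma not_tendsto_if_frequently_le: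
  fixes f :: "'a \<Rightarrow> real"
  assumes "0 < \<delta>" and "frequently (\<lambda>x. f x \<le> l - \<delta>) F"
  shows "\<not> (f \<longlongrightarrow> l) F"
proof
  assume "(f \<longlongrightarrow> l) F"
  then have "eventually (\<lambda>x. l - \<delta> < f x) F" using assms(1) by (intro order_tendstoD(1)) auto
  then have "eventually (\<lambda>x. \<not> f x \<le> l - \<delta>) F" by (rule eventually_mono) auto
  with assms(2) show False by (simp add: frequently_def)
qed

lemma fidelity_tendsto_1:
  assumes prior: "0 \<le> prior L" "0 \<le> prior H" "prior L + prior H = 1"
    and lim: "liminf (\<lambda>N. ereal (sqrt N * excess Ph \<mu> N (\<Sigma> N))) = \<infinity>"
  shows "(\<lambda>N. fidelity prior Ph \<mu> N (\<Sigma> N)) \<longlonglongrightarrow> 1"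
proof (rule tendsto_sandwich)
  define g where "g N = sqrt N * excess Ph \<mu> N (\<Sigma> N)" for N
  have ev: "\<forall>y<\<infinity>. eventually (\<lambda>N. y < ereal (g N)) sequentially"
    using le_Liminf_iff[of \<infinity> sequentially "\<lambda>N. ereal (g N)"] lim by (simp add: g_def)
  have "eventually (\<lambda>N. Z < g N) sequentially" for Z
    using ev[rule_format, of "ereal Z"] by simp
  then have g: "filterlim g at_top sequentially"
    by (simp add: filterlim_at_top_dense)
  have "filterlim (\<lambda>N. 2 * (g N)\<^sup>2) at_top sequentially"
    by (rule filterlim_tendsto_pos_mult_at_top[OF tendsto_const _ filterlim_pow_at_top[OF _ g]]) simp_all
  then have "filterlim (\<lambda>N. - (2 * (g N)\<^sup>2)) at_bot sequentially"
    by (simp add: filterlim_uminus_at_top)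
  then have "((\<lambda>N. exp (- (2 * (g N)\<^sup>2))) \<longlongrightarrow> 0) sequentially"
    by (rule filterlim_compose[OF exp_at_bot])
  from tendsto_diff[OF tendsto_const this, of 1]
  show "(\<lambda>N. 1 - exp (- 2 * (g N)\<^sup>2)) \<longlonglongrightarrow> 1" by simp
  show "eventually (\<lambda>N. 1 - exp (- 2 * (g N)\<^sup>2) \<le> fidelity prior Ph \<mu> N (\<Sigma> N)) sequentially"
    using g[unfolded filterlim_at_top_dense, rule_format, of 0]
  proof (rule eventually_mono)
    fix N assume "0 < g N"
    then have "0 < N" "0 \<le> excess Ph \<mu> N (\<Sigma> N)"
      by (auto simp: g_def zero_less_mult_iff)
    then show "1 - exp (- 2 * (g N)\<^sup>2) \<le> fidelity prior Ph \<mu> N (\<Sigma> N)"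
      unfolding g_def by (rule fidelity_ge_if_excess_nonneg[OF _ prior])
  qed
  show "eventually (\<lambda>N. fidelity prior Ph \<mu> N (\<Sigma> N) \<le> 1) sequentially"
    using fidelity_le_if_error[OF prior order_refl] by (simp add: lamA_def)
qed simp

lemma fidelity_not_tendsto_1_if_liminf_neg:
  assumes prior: "0 < prior L" "0 < prior H" "prior L + prior H = 1"
    and lim: "liminf (\<lambda>N. ereal (sqrt N * excess Ph \<mu> N (\<Sigma> N))) < 0"
  shows "\<not> (\<lambda>N. fidelity prior Ph \<mu> N (\<Sigma> N)) \<longlonglongrightarrow> 1"
proof -
  obtain y where "y < 0" and freq: "frequently (\<lambda>N. ereal (sqrt N * excess Ph \<mu> N (\<Sigma> N)) \<le> y) sequentially"
    using lim unfolding not_le[symmetric] le_Liminf_iff by (auto simp: not_eventually)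
  moreover have "y \<noteq> - \<infinity>" using freq by (auto dest: frequently_ex)
  ultimately obtain c where c: "0 < c" "y = ereal (- c)"
    by (cases y) (auto intro: that[of "- real_of_ereal y"])
  define \<delta> where "\<delta> = min (prior L) (prior H) * (1 - exp (- 2 * c\<^sup>2))"
  have "0 < \<delta>" using prior c by (simp add: \<delta>_def)
  moreover have "frequently (\<lambda>N. fidelity prior Ph \<mu> N (\<Sigma> N) \<le> 1 - \<delta>) sequentially"
    using freq
  proof (rule frequently_mono[rotated], intro allI impI)
    fix N assume "ereal (sqrt N * excess Ph \<mu> N (\<Sigma> N)) \<le> y"
    then have e: "sqrt N * excess Ph \<mu> N (\<Sigma> N) \<le> - c" using c by simp
    then have "0 < N" using c by (cases N) auto
    from error_ge_if_excess_le_neg[OF this _ e] c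
    show "fidelity prior Ph \<mu> N (\<Sigma> N) \<le> 1 - \<delta>"
      unfolding \<delta>_def using prior by (intro fidelity_le_if_error) auto
  qed
  ultimately show ?thesis by (rule not_tendsto_if_frequently_le)
qed

lemma fidelity_not_tendsto_1_if_liminf_finite:
  fixes \<psi> :: real
  assumes prior: "0 < prior L" "0 < prior H" "prior L + prior H = 1"
    and lim: "liminf (\<lambda>N. ereal (sqrt N * excess Ph \<mu> N (\<Sigma> N))) < \<infinity>"
    and var: "0 < \<psi>" "\<And>N w. 1 \<le> N \<Longrightarrow> \<psi> * N \<le> vote_var Ph w N (\<Sigma> N)"
  shows "\<not> (\<lambda>N. fidelity prior Ph \<mu> N (\<Sigma> N)) \<longlonglongrightarrow> 1"
proof -
  obtain K where freq: "frequently (\<lambda>N. sqrt N * excess Ph \<mu> N (\<Sigma> N) < K) sequentially"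
  proof -
    obtain n :: nat where "liminf (\<lambda>N. ereal (sqrt N * excess Ph \<mu> N (\<Sigma> N))) < ereal n"
      using lim less_PInf_Ex_of_nat by auto
    then obtain y where y: "y < ereal n"
      and fy: "frequently (\<lambda>N. ereal (sqrt N * excess Ph \<mu> N (\<Sigma> N)) \<le> y) sequentially"
      unfolding not_le[symmetric] le_Liminf_iff by (auto simp: not_eventually)
    from fy have "frequently (\<lambda>N. ereal (sqrt N * excess Ph \<mu> N (\<Sigma> N)) < ereal n) sequentially"
      by (rule frequently_mono[rotated]) (blast intro: le_less_trans y)
    then have "frequently (\<lambda>N. sqrt N * excess Ph \<mu> N (\<Sigma> N) < n) sequentially"
      by simp
    then show thesis by (rule that)
  qed
  define \<beta> where "\<beta> = max 1 (5 * (K + 1) / \<psi>)"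
  have \<beta>: "1 \<le> \<beta>" "5 * (K + 1) \<le> \<beta> * \<psi>"
    using var(1) by (auto simp: \<beta>_def max_def field_simps)
  define \<delta> where "\<delta> = min (prior L) (prior H) * (exp (- \<beta>\<^sup>2) / 4)"
  have "0 < \<delta>" using prior by (simp add: \<delta>_def)
  moreover have "frequently (\<lambda>N. fidelity prior Ph \<mu> N (\<Sigma> N) \<le> 1 - \<delta>) sequentially"
    using frequently_eventually_frequently[OF freq eventually_ge_at_top[of "nat \<lceil>4 * \<beta>\<^sup>2\<rceil>"]]
  proof (rule frequently_mono[rotated], intro allI impI, elim conjE)
    fix N assume e: "sqrt N * excess Ph \<mu> N (\<Sigma> N) < K" and "nat \<lceil>4 * \<beta>\<^sup>2\<rceil> \<le> N"
    then have n: "4 * \<beta>\<^sup>2 \<le> N" by linarith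
    moreover have "0 < N" using n \<beta>(1) by (cases N) auto
    ultimately have "exp (- \<beta>\<^sup>2) / 4 \<le> lamA Ph \<mu> L N (\<Sigma> N) \<or> exp (- \<beta>\<^sup>2) / 4 \<le> lamR Ph \<mu> H N (\<Sigma> N)"
      using var(2) \<beta> e by (intro error_ge_if_excess_less) auto
    then show "fidelity prior Ph \<mu> N (\<Sigma> N) \<le> 1 - \<delta>"
      unfolding \<delta>_def using prior by (intro fidelity_le_if_error) auto
  qed
  ultimately show ?thesis by (rule not_tendsto_if_frequently_le)
qed

theorem theorem4:
  fixes prior Ph :: "world \<Rightarrow> real" and \<mu> :: real
    and \<Sigma> :: "nat \<Rightarrow> nat \<Rightarrow> real \<times> real"
  assumes prior_pos: "prior L > 0" "prior H > 0" and prior_sum: "prior L + prior H = 1"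
    and sig: "0 \<le> Ph L" "Ph L < Ph H" "Ph H \<le> 1"
    and mu: "0 < \<mu>" "\<mu> < 1"
    and strat: "\<And>N n. 1 \<le> N \<Longrightarrow> n < N \<Longrightarrow>
        0 \<le> fst (\<Sigma> N n) \<and> fst (\<Sigma> N n) \<le> 1 \<and> 0 \<le> snd (\<Sigma> N n) \<and> snd (\<Sigma> N n) \<le> 1"
  shows
   "(liminf (\<lambda>N. ereal (sqrt (real N) * excess Ph \<mu> N (\<Sigma> N))) = \<infinity> \<longrightarrow>
       (\<lambda>N. fidelity prior Ph \<mu> N (\<Sigma> N)) \<longlonglongrightarrow> 1)
  \<and> (liminf (\<lambda>N. ereal (sqrt (real N) * excess Ph \<mu> N (\<Sigma> N))) < 0 \<longrightarrow>
       \<not> (\<lambda>N. fidelity prior Ph \<mu> N (\<Sigma> N)) \<longlonglongrightarrow> 1)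
  \<and> (0 \<le> liminf (\<lambda>N. ereal (sqrt (real N) * excess Ph \<mu> N (\<Sigma> N))) \<and>
      liminf (\<lambda>N. ereal (sqrt (real N) * excess Ph \<mu> N (\<Sigma> N))) < \<infinity> \<and>
      (\<exists>\<psi>>0. \<forall>N\<ge>1. \<forall>w. vote_var Ph w N (\<Sigma> N) \<ge> \<psi> * real N) \<longrightarrow>
       \<not> (\<lambda>N. fidelity prior Ph \<mu> N (\<Sigma> N)) \<longlonglongrightarrow> 1)"
proof (intro conjI impI)
  have prior: "0 \<le> prior L" "0 \<le> prior H" using prior_pos by auto
  assume "liminf (\<lambda>N. ereal (sqrt (real N) * excess Ph \<mu> N (\<Sigma> N))) = \<infinity>"
  then show "(\<lambda>N. fidelity prior Ph \<mu> N (\<Sigma> N)) \<longlonglongrightarrow> 1"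
    by (rule fidelity_tendsto_1[OF prior prior_sum])
next
  assume "liminf (\<lambda>N. ereal (sqrt (real N) * excess Ph \<mu> N (\<Sigma> N))) < 0"
  then show "\<not> (\<lambda>N. fidelity prior Ph \<mu> N (\<Sigma> N)) \<longlonglongrightarrow> 1"
    by (rule fidelity_not_tendsto_1_if_liminf_neg[OF prior_pos prior_sum])
next
  assume "0 \<le> liminf (\<lambda>N. ereal (sqrt (real N) * excess Ph \<mu> N (\<Sigma> N))) \<and>
      liminf (\<lambda>N. ereal (sqrt (real N) * excess Ph \<mu> N (\<Sigma> N))) < \<infinity> \<and>
      (\<exists>\<psi>>0. \<forall>N\<ge>1. \<forall>w. vote_var Ph w N (\<Sigma> N) \<ge> \<psi> * real N)"
  then obtain \<psi> where "liminf (\<lambda>N. ereal (sqrt (real N) * excess Ph \<mu> N (\<Sigma> N))) < \<infinity>"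
    and "0 < \<psi>" "\<And>N w. 1 \<le> N \<Longrightarrow> \<psi> * N \<le> vote_var Ph w N (\<Sigma> N)"
    by auto
  then show "\<not> (\<lambda>N. fidelity prior Ph \<mu> N (\<Sigma> N)) \<longlonglongrightarrow> 1"
    by (rule fidelity_not_tendsto_1_if_liminf_finite[OF prior_pos prior_sum])
qed

end
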